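(* For every integer $\ell\ge 3$, every graph $G$ with no induced cycle of length at least $\ell$ satisfies $\mathrm{cop}(G)\le \ell-2$.
   Context: All graphs are finite, undirected, without loops or multiple edges. Cops and Robber game on a connected graph: for an integer $k\ge 1$, the cop player places $k$ cops on (not necessarily distinct) vertices, then the robber is placed on a vertex; then, starting with the cops, the players alternate moves. In a cop move, each cop either stays or moves to an adjacent vertex; in a robber move, the robber stays or moves to an adjacent vertex. The cops win if at some point a cop and the robber occupy the same vertex. Both players have complete information. The cop number $\mathrm{cop}(G)$ of a connected graph $G$ is the smallest $k$ such that the cops have a winning strategy with $k$ cops; for a non-connected graph it is the maximum cop number of its connected components. *)

theory Defs
  imports Main
begin

definition graph :: "'a set \<Rightarrow> ('a \<Rightarrow> 'a \<Rightarrow> bool) \<Rightarrow> bool" where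
  "graph V E \<longleftrightarrow> finite V \<and> (\<forall>x y. E x y \<longrightarrow> E y x) \<and> (\<forall>x. \<not> E x x)
     \<and> (\<forall>x y. E x y \<longrightarrow> x \<in> V \<and> y \<in> V)"

definition induced_cycle :: "'a set \<Rightarrow> ('a \<Rightarrow> 'a \<Rightarrow> bool) \<Rightarrow> 'a list \<Rightarrow> bool" where
  "induced_cycle V E vs \<longleftrightarrow> length vs \<ge> 3 \<and> distinct vs \<and> set vs \<subseteq> V \<and>
     (\<forall>i < length vs. \<forall>j < length vs.
        E (vs ! i) (vs ! j) \<longleftrightarrow> (j = Suc i mod length vs \<or> i = Suc j mod length vs))"

definition reach :: "'a set \<Rightarrow> ('a \<Rightarrow> 'a \<Rightarrow> bool) \<Rightarrow> 'a \<Rightarrow> 'a \<Rightarrow> bool" where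
  "reach V E = (\<lambda>x y. E x y \<and> x \<in> V \<and> y \<in> V)\<^sup>*\<^sup>*"

definition components :: "'a set \<Rightarrow> ('a \<Rightarrow> 'a \<Rightarrow> bool) \<Rightarrow> 'a set set" where
  "components V E = {{u. reach V E v u} | v. v \<in> V}"

definition connected_graph :: "'a set \<Rightarrow> ('a \<Rightarrow> 'a \<Rightarrow> bool) \<Rightarrow> bool" where
  "connected_graph V E \<longleftrightarrow> V \<noteq> {} \<and> (\<forall>u\<in>V. \<forall>v\<in>V. reach V E u v)"

text \<open>A cop strategy s maps the history of the game (list of (cop positions, robber position)
  states so far) to the next cop positions; s [] is the initial placement.
  Timeline: C 0 = s [], then the robber places itself at R 0; in round t+1 the cops move
  to C (t+1) = s (history up to t), then the robber moves to R (t+1).\<close>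

definition cop_step :: "('a \<Rightarrow> 'a \<Rightarrow> bool) \<Rightarrow> 'a list \<Rightarrow> 'a list \<Rightarrow> bool" where
  "cop_step E c c' \<longleftrightarrow> length c' = length c \<and>
     (\<forall>i < length c. c' ! i = c ! i \<or> E (c ! i) (c' ! i))"

definition robber_walk :: "'a set \<Rightarrow> ('a \<Rightarrow> 'a \<Rightarrow> bool) \<Rightarrow> (nat \<Rightarrow> 'a) \<Rightarrow> bool" where
  "robber_walk V E R \<longleftrightarrow> R 0 \<in> V \<and> (\<forall>t. R (Suc t) = R t \<or> E (R t) (R (Suc t)))"

primrec history :: "(('a list \<times> 'a) list \<Rightarrow> 'a list) \<Rightarrow> (nat \<Rightarrow> 'a) \<Rightarrow> nat \<Rightarrow> ('a list \<times> 'a) list" where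
  "history s R 0 = [(s [], R 0)]"
| "history s R (Suc t) = history s R t @ [(s (history s R t), R (Suc t))]"

definition cop_pos :: "(('a list \<times> 'a) list \<Rightarrow> 'a list) \<Rightarrow> (nat \<Rightarrow> 'a) \<Rightarrow> nat \<Rightarrow> 'a list" where
  "cop_pos s R t = fst (last (history s R t))"

definition winning_cop_strategy ::
  "'a set \<Rightarrow> ('a \<Rightarrow> 'a \<Rightarrow> bool) \<Rightarrow> nat \<Rightarrow> (('a list \<times> 'a) list \<Rightarrow> 'a list) \<Rightarrow> bool" where
  "winning_cop_strategy V E k s \<longleftrightarrow> length (s []) = k \<and> set (s []) \<subseteq> V \<and>
     (\<forall>R. robber_walk V E R \<longrightarrow>
        (\<forall>t. cop_step E (cop_pos s R t) (cop_pos s R (Suc t))) \<and>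
        (\<exists>t. \<exists>i < k. cop_pos s R t ! i = R t \<or> cop_pos s R (Suc t) ! i = R t))"

definition cops_win :: "'a set \<Rightarrow> ('a \<Rightarrow> 'a \<Rightarrow> bool) \<Rightarrow> nat \<Rightarrow> bool" where
  "cops_win V E k \<longleftrightarrow> (\<exists>s. winning_cop_strategy V E k s)"

definition cop_number_conn :: "'a set \<Rightarrow> ('a \<Rightarrow> 'a \<Rightarrow> bool) \<Rightarrow> nat" where
  "cop_number_conn V E = (LEAST k. k \<ge> 1 \<and> cops_win V E k)"

definition cop_number :: "'a set \<Rightarrow> ('a \<Rightarrow> 'a \<Rightarrow> bool) \<Rightarrow> nat" where
  "cop_number V E = (if V = {} then 0 else
     Max ((\<lambda>C. cop_number_conn C (\<lambda>x y. E x y \<and> x \<in> C \<and> y \<in> C)) ` components V E))"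

end

(*
  The k = l - 2 cops occupy every vertex of an induced path P while the robber lives in a
  component C of G - N[P]; he is caught as soon as he enters N[P]. An end of P without a private
  neighbour on the boundary of C is abandoned; otherwise duplicate cops (sharing a vertex) walk to
  the last vertex of P, and from there one of them extends P by a private neighbour of that end.
  Each round shrinks C, or keeps C and shortens P, or keeps both and moves a duplicate cop forward,
  so the robber is eventually caught. Without duplicate cops |P| <= k, and the private neighbours
  of the two ends of P must coincide, since distinct ones would be joined through C to an induced
  cycle of length at least |P| + 2. So then P is a single vertex whose boundary towards C is a
  single vertex v, and the cop steps onto v.
*)

theory Submission
  imports Defs
begin

locale simple_graph =
  fixes V :: "'a set" and E :: "'a \<Rightarrow> 'a \<Rightarrow> bool"
  assumes graph: "graph V E"
begin

lemma finite_V: "finite V"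
  using graph unfolding graph_def by blast

lemma edge_sym: "E x y \<Longrightarrow> E y x"
  using graph unfolding graph_def by blast

lemma edge_commute: "E x y \<longleftrightarrow> E y x"
  using edge_sym by blast

lemma edge_irrefl [simp]: "\<not> E x x"
  using graph unfolding graph_def by blast

lemma edge_in_V:
  assumes "E x y" shows "x \<in> V" "y \<in> V"
  using graph assms unfolding graph_def by blast+

definition closed_nbh :: "'a set \<Rightarrow> 'a set" where
  "closed_nbh S = {x. \<exists>u\<in>S. x = u \<or> E u x}"

definition restrict_edges :: "'a set \<Rightarrow> 'a \<Rightarrow> 'a \<Rightarrow> bool" where
  "restrict_edges X = (\<lambda>a b. E a b \<and> a \<in> X \<and> b \<in> X)"

definition component_of :: "'a set \<Rightarrow> 'a \<Rightarrow> 'a set" where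
  "component_of X r = {u. (restrict_edges X)\<^sup>*\<^sup>* r u}"

definition boundary :: "'a set \<Rightarrow> 'a set" where
  "boundary C = {x. x \<notin> C \<and> (\<exists>c\<in>C. E c x)}"

lemma closed_nbh_mono: "S \<subseteq> T \<Longrightarrow> closed_nbh S \<subseteq> closed_nbh T"
  unfolding closed_nbh_def by auto

lemma subset_closed_nbh: "S \<subseteq> closed_nbh S"
  unfolding closed_nbh_def by auto

lemma restrict_edges_symp: "symp (restrict_edges X)"
  unfolding restrict_edges_def symp_def using edge_sym by blast

lemma component_of_refl: "r \<in> component_of X r"
  unfolding component_of_def by simp

lemma component_of_subset: assumes "r \<in> X" shows "component_of X r \<subseteq> X"
proof
  fix u assume "u \<in> component_of X r"
  then have "(restrict_edges X)\<^sup>*\<^sup>* r u" unfolding component_of_def by simp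
  then show "u \<in> X" using assms
    by (induction rule: rtranclp_induct) (auto simp: restrict_edges_def)
qed

lemma component_of_closed:
  "r \<in> X \<Longrightarrow> u \<in> component_of X r \<Longrightarrow> b \<in> X \<Longrightarrow> E u b \<Longrightarrow> b \<in> component_of X r"
  using component_of_subset unfolding component_of_def
  by (auto simp: restrict_edges_def intro: rtranclp.rtrancl_into_rtrancl)

lemma component_of_eq:
  assumes "u \<in> component_of X r" shows "component_of X u = component_of X r"
proof -
  have "(restrict_edges X)\<^sup>*\<^sup>* r u" using assms unfolding component_of_def by simp
  moreover from this have "(restrict_edges X)\<^sup>*\<^sup>* u r"
    using sympD[OF symp_rtranclp[OF restrict_edges_symp]] by blast
  ultimately show ?thesis unfolding component_of_def by (auto intro: rtranclp_trans)
qed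

lemma component_of_mono: "X' \<subseteq> X \<Longrightarrow> component_of X' r \<subseteq> component_of X r"
  unfolding component_of_def
  by (auto elim: rtranclp_mono[THEN predicate2D, rotated] simp: restrict_edges_def)

lemma component_of_least:
  assumes "r \<in> C" "\<And>a b. a \<in> C \<Longrightarrow> b \<in> X \<Longrightarrow> E a b \<Longrightarrow> b \<in> C"
  shows "component_of X r \<subseteq> C"
proof
  fix u assume "u \<in> component_of X r"
  then have "(restrict_edges X)\<^sup>*\<^sup>* r u" unfolding component_of_def by simp
  then show "u \<in> C" using assms
    by (induction rule: rtranclp_induct) (auto simp: restrict_edges_def)
qed

lemma rtranclp_exit_edge:
  assumes "(restrict_edges X)\<^sup>*\<^sup>* a b" "a \<in> C" "b \<notin> C"
  shows "\<exists>c\<in>C. \<exists>d. d \<notin> C \<and> E c d"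
  using assms by (induction rule: rtranclp_induct) (auto simp: restrict_edges_def)

lemma reach_eq: "reach V E = (restrict_edges V)\<^sup>*\<^sup>*"
  unfolding reach_def restrict_edges_def ..

lemma boundary_component_of_outside_nbh:
  assumes "r \<in> V - closed_nbh S" "x \<in> boundary (component_of (V - closed_nbh S) r)"
  shows "x \<in> closed_nbh S" "x \<notin> S"
proof -
  let ?X = "V - closed_nbh S"
  obtain c where c: "c \<in> component_of ?X r" "E c x" "x \<notin> component_of ?X r"
    using assms(2) unfolding boundary_def by auto
  have "c \<in> ?X" using component_of_subset[OF assms(1)] c by auto
  then show "x \<notin> S" using edge_sym[OF c(2)] unfolding closed_nbh_def by auto
  show "x \<in> closed_nbh S"
    using component_of_closed[OF assms(1) c(1) _ c(2)] c(3) edge_in_V(2)[OF c(2)] by auto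
qed

definition walk :: "'a list \<Rightarrow> bool" where
  "walk w \<longleftrightarrow> (\<forall>j. Suc j < length w \<longrightarrow> E (w ! j) (w ! Suc j))"

definition induced_path :: "'a list \<Rightarrow> bool" where
  "induced_path xs \<longleftrightarrow> distinct xs \<and>
     (\<forall>a < length xs. \<forall>b < length xs. E (xs ! a) (xs ! b) \<longleftrightarrow> (b = Suc a \<or> a = Suc b))"

definition inner_in :: "'a list \<Rightarrow> 'a set \<Rightarrow> bool" where
  "inner_in w C \<longleftrightarrow> (\<forall>j. 0 < j \<longrightarrow> j < length w - 1 \<longrightarrow> w ! j \<in> C)"

lemma walk_of_rtranclp:
  assumes "(restrict_edges X)\<^sup>*\<^sup>* a b"
  shows "\<exists>w. w \<noteq> [] \<and> hd w = a \<and> last w = b \<and> walk w \<and> (\<forall>u \<in> set w. (restrict_edges X)\<^sup>*\<^sup>* a u)"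
  using assms
proof (induction rule: rtranclp_induct)
  case base
  then show ?case by (intro exI[of _ "[a]"]) (auto simp: walk_def)
next
  case (step y z)
  then obtain w where w: "w \<noteq> []" "hd w = a" "last w = y" "walk w"
    "\<forall>u \<in> set w. (restrict_edges X)\<^sup>*\<^sup>* a u" by blast
  have "walk (w @ [z])" unfolding walk_def
  proof (intro allI impI)
    fix j assume j: "Suc j < length (w @ [z])"
    show "E ((w @ [z]) ! j) ((w @ [z]) ! Suc j)"
    proof (cases "Suc j < length w")
      case True then show ?thesis using w(4) unfolding walk_def by (simp add: nth_append)
    next
      case False
      then have "j = length w - 1" using j by simp
      moreover have "w ! (length w - 1) = y" using w(1,3) by (simp add: last_conv_nth)
      ultimately show ?thesis using step(2) w(1) False by (auto simp: nth_append restrict_edges_def)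
    qed
  qed
  then show ?case using w step
    by (intro exI[of _ "w @ [z]"]) (auto intro: rtranclp.rtrancl_into_rtrancl)
qed

text \<open>Cutting out the segment strictly between positions \<open>a - 1\<close> and \<open>b\<close> of a walk, which is
  possible when \<open>w ! (a - 1)\<close> is adjacent to \<open>w ! b\<close> (or, for \<open>a = 0\<close>, when \<open>w ! b\<close> is the start).\<close>
lemma walk_shortcut:
  assumes "walk w" "inner_in w C" "a < b" "b < length w"
    "a = 0 \<Longrightarrow> w ! b = w ! 0" "a > 0 \<Longrightarrow> E (w ! (a - 1)) (w ! b)" "2 \<le> a + (length w - b)"
  defines "w' \<equiv> take a w @ drop b w"
  shows "walk w'" "inner_in w' C" "length w' < length w" "2 \<le> length w'"
    "w' ! 0 = w ! 0" "w' ! (length w' - 1) = w ! (length w - 1)"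
proof -
  have len: "length w' = a + (length w - b)" using assms unfolding w'_def by simp
  have nth: "w' ! j = (if j < a then w ! j else w ! (b + (j - a)))" for j
    using assms(3,4) unfolding w'_def by (auto simp: nth_append min_def)
  show "walk w'" unfolding walk_def
  proof (intro allI impI)
    fix j assume j: "Suc j < length w'"
    consider "Suc j < a" | "Suc j = a" | "j \<ge> a" by linarith
    then show "E (w' ! j) (w' ! Suc j)"
    proof cases
      case 1 then show ?thesis using assms(1,3,4) nth unfolding walk_def
        by (metis Suc_lessD less_trans)
    next
      case 2 then show ?thesis using assms(6) nth by auto
    next
      case 3
      have "Suc (b + (j - a)) < length w" using j len 3 by simp
      then have "E (w ! (b + (j - a))) (w ! Suc (b + (j - a)))"
        using assms(1) unfolding walk_def by blast
      moreover have "b + (Suc j - a) = Suc (b + (j - a))" using 3 by simp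
      ultimately show ?thesis using nth 3 by simp
    qed
  qed
  show "inner_in w' C" unfolding inner_in_def
  proof (intro allI impI)
    fix j assume j: "0 < j" "j < length w' - 1"
    show "w' ! j \<in> C"
    proof (cases "j < a")
      case True then show ?thesis using nth assms(2,3,4) j unfolding inner_in_def by auto
    next
      case False
      have "0 < b + (j - a)" "b + (j - a) < length w - 1" using j len False assms(3) by auto
      then show ?thesis using nth assms(2) False unfolding inner_in_def by auto
    qed
  qed
  show "w' ! 0 = w ! 0" using nth assms(5) by (cases "a = 0") auto
  show "w' ! (length w' - 1) = w ! (length w - 1)" using nth len assms(3,4) by auto
  show "length w' < length w" "2 \<le> length w'" using len assms(3,4,7) by auto
qed

lemma walk_not_induced_path:
  assumes "walk w" "\<not> induced_path w"
  obtains a b where "a < b" "b < length w" "w ! a = w ! b \<or> (Suc a < b \<and> E (w ! a) (w ! b))"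
proof (cases "distinct w")
  case False
  then obtain a b where "a < length w" "b < length w" "a \<noteq> b" "w ! a = w ! b"
    by (auto simp: distinct_conv_nth)
  then show ?thesis using that by (metis linorder_neqE_nat)
next
  case True
  then obtain a b where ab: "a < length w" "b < length w"
      "E (w ! a) (w ! b) \<noteq> (b = Suc a \<or> a = Suc b)"
    using assms(2) unfolding induced_path_def by blast
  have "b = Suc a \<or> a = Suc b \<Longrightarrow> E (w ! a) (w ! b)"
    using assms(1) ab edge_sym unfolding walk_def by blast
  then have "E (w ! a) (w ! b)" "b \<noteq> Suc a" "a \<noteq> Suc b" using ab by auto
  moreover from this have "a \<noteq> b" by auto
  ultimately show ?thesis using that ab edge_sym by (metis Suc_lessI linorder_neqE_nat)
qed

lemma induced_path_of_walk:
  assumes "walk w" "2 \<le> length w" "w ! 0 \<noteq> w ! (length w - 1)" "inner_in w C"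
  obtains p where "induced_path p" "2 \<le> length p" "p ! 0 = w ! 0"
    "p ! (length p - 1) = w ! (length w - 1)" "inner_in p C"
  using assms
proof (induction "length w" arbitrary: w rule: less_induct)
  case less
  show ?case
  proof (cases "induced_path w")
    case True then show ?thesis using less by blast
  next
    case False
    then obtain a b where ab: "a < b" "b < length w"
        "w ! a = w ! b \<or> (Suc a < b \<and> E (w ! a) (w ! b))"
      using walk_not_induced_path less(3) by blast
    \<comment> \<open>a repeated vertex is cut out together with everything between its occurrences;
      a chord \<open>w ! a\<close>--\<open>w ! b\<close> bypasses the vertices strictly between them\<close>
    define a' where "a' = (if w ! a = w ! b then a else Suc a)"
    have "a' < b" "a' = 0 \<Longrightarrow> w ! b = w ! 0" using ab unfolding a'_def by (auto split: if_splits)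
    moreover have "E (w ! (a' - 1)) (w ! b)" if "a' > 0"
    proof (cases "w ! a = w ! b")
      case True
      then have "Suc (a - 1) = a" "a < length w" using that ab unfolding a'_def by auto
      then show ?thesis using less(3) True unfolding walk_def a'_def by metis
    qed (use ab in \<open>auto simp: a'_def\<close>)
    moreover have "2 \<le> a' + (length w - b)"
    proof -
      have "b \<noteq> length w - 1 \<or> a' > 0"
        using ab less(5) unfolding a'_def by (cases "a = 0") auto
      then show ?thesis using ab by auto
    qed
    ultimately have w': "walk (take a' w @ drop b w)" "inner_in (take a' w @ drop b w) C"
      "length (take a' w @ drop b w) < length w" "2 \<le> length (take a' w @ drop b w)"
      "(take a' w @ drop b w) ! 0 = w ! 0"
      "(take a' w @ drop b w) ! (length (take a' w @ drop b w) - 1) = w ! (length w - 1)"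
      using walk_shortcut[OF less(3) less(6) _ ab(2)] by simp_all
    show ?thesis
      by (rule less(1)[OF w'(3) less(2) w'(1,4)]) (use w' less(5) in simp_all)
  qed
qed

lemma induced_path_rev: "induced_path w \<Longrightarrow> induced_path (rev w)"
  unfolding induced_path_def
proof (intro conjI allI impI, simp)
  fix a b
  assume h: "distinct w \<and> (\<forall>a<length w. \<forall>b<length w. E (w ! a) (w ! b) = (b = Suc a \<or> a = Suc b))"
    "a < length (rev w)" "b < length (rev w)"
  then have "E (w ! (length w - Suc a)) (w ! (length w - Suc b)) =
    (length w - Suc b = Suc (length w - Suc a) \<or> length w - Suc a = Suc (length w - Suc b))" by auto
  moreover have "(length w - Suc b = Suc (length w - Suc a) \<or> length w - Suc a = Suc (length w - Suc b))
     \<longleftrightarrow> (b = Suc a \<or> a = Suc b)" using h(2,3) by auto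
  ultimately show "E (rev w ! a) (rev w ! b) = (b = Suc a \<or> a = Suc b)"
    using h(2,3) by (simp add: rev_nth)
qed

lemma induced_path_take: "induced_path P \<Longrightarrow> induced_path (take n P)"
  unfolding induced_path_def by (auto simp: nth_take)

lemma induced_path_drop: "induced_path P \<Longrightarrow> induced_path (drop n P)"
  unfolding induced_path_def by (auto simp: nth_drop)

lemma induced_path_snoc:
  assumes "induced_path P" "P \<noteq> []" "v \<notin> set P"
    "\<And>m. m < length P \<Longrightarrow> E (P ! m) v \<longleftrightarrow> m = length P - 1"
  shows "induced_path (P @ [v])"
  unfolding induced_path_def
proof (intro conjI allI impI)
  show "distinct (P @ [v])" using assms(1,3) unfolding induced_path_def by simp
  fix a b assume ab: "a < length (P @ [v])" "b < length (P @ [v])"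
  have P: "\<And>a b. a < length P \<Longrightarrow> b < length P \<Longrightarrow> E (P ! a) (P ! b) \<longleftrightarrow> (b = Suc a \<or> a = Suc b)"
    using assms(1) unfolding induced_path_def by blast
  consider "a < length P" "b < length P" | "a = length P" "b < length P"
    | "a < length P" "b = length P" | "a = length P" "b = length P" using ab by fastforce
  then show "E ((P @ [v]) ! a) ((P @ [v]) ! b) = (b = Suc a \<or> a = Suc b)"
  proof cases
    case 1 then show ?thesis using P by (simp add: nth_append)
  next
    case 2 then show ?thesis using assms(2) assms(4)[of b] edge_commute[of v] by (auto simp: nth_append)
  next
    case 3 then show ?thesis using assms(2) assms(4)[of a] by (auto simp: nth_append)
  qed simp
qed

lemma induced_cycle_append:
  assumes A: "induced_path A" and B: "induced_path B" and dj: "set A \<inter> set B = {}"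
    and ne: "A \<noteq> []" "B \<noteq> []" and l3: "length A + length B \<ge> 3"
    and sv: "set A \<subseteq> V" "set B \<subseteq> V"
    and cr: "\<And>a b. a < length A \<Longrightarrow> b < length B \<Longrightarrow>
       E (A ! a) (B ! b) \<longleftrightarrow> ((a = length A - 1 \<and> b = 0) \<or> (a = 0 \<and> b = length B - 1))"
  shows "induced_cycle V E (A @ B)"
proof -
  let ?p = "length A" and ?q = "length B" and ?L = "length A + length B"
  have p1: "?p > 0" "?q > 0" using ne by auto
  have "E ((A @ B) ! i) ((A @ B) ! j) \<longleftrightarrow> (j = Suc i mod ?L \<or> i = Suc j mod ?L)"
    if ij: "i < ?L" "j < ?L" for i j
  proof -
    have mi: "Suc i mod ?L = (if Suc i = ?L then 0 else Suc i)"
     and mj: "Suc j mod ?L = (if Suc j = ?L then 0 else Suc j)" using ij by auto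
    consider "i < ?p" "j < ?p" | "i \<ge> ?p" "j \<ge> ?p" | "i < ?p" "j \<ge> ?p" | "i \<ge> ?p" "j < ?p"
      by linarith
    then show ?thesis
    proof cases
      case 1
      then have "E ((A @ B) ! i) ((A @ B) ! j) \<longleftrightarrow> (j = Suc i \<or> i = Suc j)"
        using A unfolding induced_path_def by (simp add: nth_append)
      then show ?thesis unfolding mi mj using 1 p1 ij by (auto simp del: length_greater_0_conv)
    next
      case 2
      then have "E ((A @ B) ! i) ((A @ B) ! j) \<longleftrightarrow> (j - ?p = Suc (i - ?p) \<or> i - ?p = Suc (j - ?p))"
        using B ij unfolding induced_path_def by (simp add: nth_append)
      then show ?thesis unfolding mi mj using 2 p1 ij by (auto simp del: length_greater_0_conv)
    next
      case 3
      then have "E ((A @ B) ! i) ((A @ B) ! j) \<longleftrightarrow>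
          ((i = ?p - 1 \<and> j - ?p = 0) \<or> (i = 0 \<and> j - ?p = ?q - 1))"
        using cr[of i "j - ?p"] ij by (simp add: nth_append)
      then show ?thesis unfolding mi mj using 3 p1 ij by (auto simp del: length_greater_0_conv)
    next
      case 4
      then have "E ((A @ B) ! i) ((A @ B) ! j) \<longleftrightarrow>
          ((j = ?p - 1 \<and> i - ?p = 0) \<or> (j = 0 \<and> i - ?p = ?q - 1))"
        using cr[of j "i - ?p"] ij edge_commute[of "B ! (i - ?p)" "A ! j"] by (simp add: nth_append)
      then show ?thesis unfolding mi mj using 4 p1 ij by (auto simp del: length_greater_0_conv)
    qed
  qed
  then show ?thesis unfolding induced_cycle_def
    using l3 A B dj sv unfolding induced_path_def by auto
qed

lemma walk_Cons_snoc:
  assumes "walk w" "w \<noteq> []" "E x (hd w)" "E (last w) y"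
  shows "walk (x # w @ [y])"
  unfolding walk_def
proof (intro allI impI)
  fix j assume j: "Suc j < length (x # w @ [y])"
  consider "j = 0" | "j > 0" "Suc j < length w + 1" | "Suc j = length w + 1" using j by fastforce
  then show "E ((x # w @ [y]) ! j) ((x # w @ [y]) ! Suc j)"
  proof cases
    case 1 then show ?thesis using assms(2,3) by (simp add: hd_conv_nth nth_append)
  next
    case 2
    then obtain j' where "j = Suc j'" "Suc j' < length w" by (cases j) auto
    then show ?thesis using assms(1) unfolding walk_def by (simp add: nth_append)
  next
    case 3
    then show ?thesis using assms(2,4) by (cases w rule: rev_cases) (auto simp: nth_append)
  qed
qed

lemma inner_in_Cons_snoc: "set w \<subseteq> C \<Longrightarrow> inner_in (x # w @ [y]) C"
  unfolding inner_in_def by (auto simp: nth_append nth_Cons' dest!: nth_mem)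

lemma induced_path_across_component:
  assumes r: "r \<in> X" and x: "x \<in> boundary (component_of X r)"
    and y: "y \<in> boundary (component_of X r)" and "x \<noteq> y"
  obtains p where "induced_path p" "2 \<le> length p" "p ! 0 = x" "p ! (length p - 1) = y"
    "inner_in p (component_of X r)"
proof -
  let ?C = "component_of X r"
  obtain c1 c2 where c: "c1 \<in> ?C" "E c1 x" "c2 \<in> ?C" "E c2 y"
    using x y unfolding boundary_def by auto
  then have "(restrict_edges X)\<^sup>*\<^sup>* c1 c2"
    using component_of_eq[of c1 X r] unfolding component_of_def by auto
  then obtain w where w: "w \<noteq> []" "hd w = c1" "last w = c2" "walk w"
      "\<forall>u \<in> set w. (restrict_edges X)\<^sup>*\<^sup>* c1 u"
    using walk_of_rtranclp by blast
  have "set w \<subseteq> ?C"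
    using w(5) component_of_eq[of c1 X r] c(1) unfolding component_of_def by auto
  then have "inner_in (x # w @ [y]) ?C" by (rule inner_in_Cons_snoc)
  moreover have "walk (x # w @ [y])"
    using walk_Cons_snoc[OF w(4,1)] edge_sym[OF c(2)] c(4) w(2,3) by simp
  moreover have "(x # w @ [y]) ! 0 = x" "(x # w @ [y]) ! (length (x # w @ [y]) - 1) = y"
    "2 \<le> length (x # w @ [y])" by (simp_all add: nth_append)
  ultimately show ?thesis using induced_path_of_walk that \<open>x \<noteq> y\<close> by metis
qed

lemma long_induced_cycle:
  assumes P: "induced_path P" "P \<noteq> []" "set P \<subseteq> V"
    and r: "r \<in> V - closed_nbh (set P)"
    and x: "x \<in> boundary (component_of (V - closed_nbh (set P)) r)" "E (P ! 0) x"
      "\<forall>m<length P. E (P ! m) x \<longrightarrow> m = 0"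
    and y: "y \<in> boundary (component_of (V - closed_nbh (set P)) r)" "E (P ! (length P - 1)) y"
      "\<forall>m<length P. E (P ! m) y \<longrightarrow> m = length P - 1"
    and "x \<noteq> y"
  shows "\<exists>vs. induced_cycle V E vs \<and> length vs \<ge> length P + 2"
proof -
  define C where "C = component_of (V - closed_nbh (set P)) r"
  have CV: "C \<subseteq> V - closed_nbh (set P)" using component_of_subset[OF r] unfolding C_def .
  have CP: "\<not> E (P ! m) z \<and> P ! m \<noteq> z" if "m < length P" "z \<in> C" for z m
    using that CV unfolding closed_nbh_def by fastforce
  obtain p where p: "induced_path p" "2 \<le> length p" "p ! 0 = x" "p ! (length p - 1) = y" "inner_in p C"
    using induced_path_across_component[OF _ x(1) y(1) \<open>x \<noteq> y\<close>] r unfolding C_def by blast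
  have in_p: "z = x \<or> z = y \<or> z \<in> C" if z: "z \<in> set p" for z
  proof -
    obtain j where j: "j < length p" "p ! j = z" using z by (auto simp: in_set_conv_nth)
    show ?thesis using p(3,4,5) j unfolding inner_in_def
      by (cases "j = 0"; cases "j = length p - 1") auto
  qed
  have "x \<notin> set P" "y \<notin> set P" "x \<in> V" "y \<in> V"
    using boundary_component_of_outside_nbh(2)[OF r] x(1) y(1) edge_in_V(2) x(2) y(2) by auto
  then have dj: "set P \<inter> set (rev p) = {}" and pV: "set (rev p) \<subseteq> V"
    using in_p CP CV by (fastforce simp: in_set_conv_nth)+
  have "E (P ! a) (rev p ! b) \<longleftrightarrow> ((a = length P - 1 \<and> b = 0) \<or> (a = 0 \<and> b = length (rev p) - 1))"
    if ab: "a < length P" "b < length (rev p)" for a b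
  proof -
    have pb: "rev p ! b = p ! (length p - Suc b)" using ab by (simp add: rev_nth)
    consider "b = 0" | "b = length p - 1" | "0 < b" "b < length p - 1" using ab by fastforce
    then show ?thesis
    proof cases
      case 3
      then have "p ! (length p - Suc b) \<in> C" using p(5) unfolding inner_in_def by auto
      then show ?thesis using CP[OF ab(1)] pb 3 by auto
    qed (use pb p(2,3,4) x y ab in auto)
  qed
  moreover have "rev p \<noteq> []" using p(2) by auto
  moreover have "length P + length (rev p) \<ge> 3" using p(2) P(2) by (cases P) simp_all
  ultimately have "induced_cycle V E (P @ rev p)"
    using induced_cycle_append[OF P(1) induced_path_rev[OF p(1)] dj P(2) _ _ P(3) pV] by blast
  then show ?thesis using p(2) by (intro exI[of _ "P @ rev p"]) simp
qed

end

lemma cop_step_mapI: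
  assumes "length J' = length J"
    "\<And>j. j < length J \<Longrightarrow> P' ! (J' ! j) = P ! (J ! j) \<or> E (P ! (J ! j)) (P' ! (J' ! j))"
  shows "cop_step E (map ((!) P) J) (map ((!) P') J')"
  using assms unfolding cop_step_def by simp

definition duplicate :: "nat list \<Rightarrow> nat \<Rightarrow> bool" where
  "duplicate J j \<longleftrightarrow> (\<exists>j'<j. J ! j' = J ! j)"

lemma exists_non_duplicate:
  assumes "\<exists>j<n. J ! j = m"
  shows "\<exists>j<n. J ! j = m \<and> \<not> duplicate J j"
proof -
  obtain j where "j < n \<and> J ! j = m" "\<And>j'. j' < n \<and> J ! j' = m \<Longrightarrow> j \<le> j'"
    using assms ex_has_least_nat[of "\<lambda>j. j < n \<and> J ! j = m" _ id] by auto
  then show ?thesis unfolding duplicate_def by (metis less_trans not_le)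
qed

lemma card_le_if_no_duplicate:
  assumes "\<And>j. j < n \<Longrightarrow> \<not> duplicate J j" "\<And>j. j < n \<Longrightarrow> J ! j < m"
  shows "n \<le> m"
proof -
  have "inj_on ((!) J) {..<n}"
    using assms(1) unfolding inj_on_def duplicate_def by (metis lessThan_iff linorder_neqE_nat)
  moreover have "(!) J ` {..<n} \<subseteq> {..<m}" using assms(2) by auto
  ultimately show ?thesis using card_inj_on_le[of "(!) J" "{..<n}" "{..<m}"] by simp
qed

definition advance :: "(nat \<Rightarrow> bool) \<Rightarrow> nat list \<Rightarrow> nat list" where
  "advance Q J = map (\<lambda>j. if Q (J ! j) \<and> duplicate J j then Suc (J ! j) else J ! j) [0..<length J]"

lemma length_advance [simp]: "length (advance Q J) = length J"
  unfolding advance_def by simp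

lemma nth_advance:
  "j < length J \<Longrightarrow> advance Q J ! j = (if Q (J ! j) \<and> duplicate J j then Suc (J ! j) else J ! j)"
  unfolding advance_def by simp

lemma cop_step_advance:
  assumes "\<And>m. Q m \<Longrightarrow> E (P ! m) (P' ! Suc m)" "\<And>j. j < length J \<Longrightarrow> P' ! (J ! j) = P ! (J ! j)"
  shows "cop_step E (map ((!) P) J) (map ((!) P') (advance Q J))"
  by (rule cop_step_mapI) (use assms in \<open>auto simp: nth_advance\<close>)

locale cop_game = simple_graph +
  fixes k :: nat
  assumes k_pos: "k \<ge> 1"
    and connected: "connected_graph V E"
    and short_induced_cycles: "\<And>vs. induced_cycle V E vs \<Longrightarrow> length vs < k + 2"
begin

text \<open>Cop \<open>j\<close> stands on the vertex \<open>P ! (J ! j)\<close> of the induced path \<open>P\<close>.\<close>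
definition formation :: "'a list \<Rightarrow> nat list \<Rightarrow> bool" where
  "formation P J \<longleftrightarrow> induced_path P \<and> P \<noteq> [] \<and> set P \<subseteq> V \<and> length J = k \<and>
     (\<forall>j<k. J ! j < length P) \<and> (\<forall>m<length P. \<exists>j<k. J ! j = m)"

definition guards :: "'a list \<Rightarrow> nat list \<Rightarrow> 'a \<Rightarrow> bool" where
  "guards P J r \<longleftrightarrow> formation P J \<and> r \<in> V \<and> r \<notin> closed_nbh (set P)"

definition territory :: "'a list \<Rightarrow> 'a \<Rightarrow> 'a set" where
  "territory P r = component_of (V - closed_nbh (set P)) r"

definition private_nbr :: "'a list \<Rightarrow> 'a \<Rightarrow> nat \<Rightarrow> 'a \<Rightarrow> bool" where
  "private_nbr P r m x \<longleftrightarrow> x \<in> boundary (territory P r) \<and> E (P ! m) x \<and>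
     (\<forall>m'<length P. E (P ! m') x \<longrightarrow> m' = m)"

definition progress :: "(('a list \<times> nat list \<times> 'a) \<times> ('a list \<times> nat list \<times> 'a)) set" where
  "progress = measures [\<lambda>(P, J, r). card (territory P r), \<lambda>(P, J, r). length P,
     \<lambda>(P, J, r). \<Sum>j<length J. length P - 1 - J ! j]"

lemma wf_progress: "wf progress"
  unfolding progress_def by simp

lemma progress_smaller_territory:
  "card (territory P' r') < card (territory P r) \<Longrightarrow> ((P', J', r'), (P, J, r)) \<in> progress"
  unfolding progress_def by simp

lemma progress_shorter_path:
  "territory P' r' = territory P r \<Longrightarrow> length P' < length P \<Longrightarrow> ((P', J', r'), (P, J, r)) \<in> progress"
  unfolding progress_def by simp

lemma progress_advance:
  assumes "territory P r' = territory P r" "length J' = length J"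
    "(\<Sum>j<length J. length P - 1 - J' ! j) < (\<Sum>j<length J. length P - 1 - J ! j)"
  shows "((P, J', r'), (P, J, r)) \<in> progress"
  using assms unfolding progress_def by simp

context
  fixes P J r
  assumes g: "guards P J r"
begin

lemma guards_formation: "formation P J"
  using g unfolding guards_def by simp

lemma guards_path: "induced_path P" "P \<noteq> []" "set P \<subseteq> V"
  and guards_cops: "length J = k" "\<And>j. j < k \<Longrightarrow> J ! j < length P"
    "\<And>m. m < length P \<Longrightarrow> \<exists>j<k. J ! j = m"
  using guards_formation unfolding formation_def by auto

lemma guards_robber: "r \<in> V - closed_nbh (set P)"
  using g unfolding guards_def by simp

lemma robber_in_territory: "r \<in> territory P r"
  unfolding territory_def by (rule component_of_refl)

lemma territory_subset: "territory P r \<subseteq> V - closed_nbh (set P)"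
  unfolding territory_def using component_of_subset[OF guards_robber] .

lemma finite_territory: "finite (territory P r)"
  using territory_subset finite_V by (meson Diff_subset finite_subset subset_trans)

lemma territory_closed:
  "a \<in> territory P r \<Longrightarrow> b \<in> V - closed_nbh (set P) \<Longrightarrow> E a b \<Longrightarrow> b \<in> territory P r"
  unfolding territory_def using component_of_closed[OF guards_robber] by blast

lemma boundary_territoryI:
  "a \<in> territory P r \<Longrightarrow> b \<notin> territory P r \<Longrightarrow> E a b \<Longrightarrow> b \<in> boundary (territory P r)"
  unfolding boundary_def by auto

lemma boundary_territoryD:
  assumes "x \<in> boundary (territory P r)"
  shows "\<exists>m<length P. E (P ! m) x" "x \<notin> set P" "x \<in> V"
proof -
  have "x \<in> closed_nbh (set P)" "x \<notin> set P"
    using boundary_component_of_outside_nbh[OF guards_robber] assms unfolding territory_def by auto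
  then obtain u where "u \<in> set P" "E u x" unfolding closed_nbh_def by auto
  then show "\<exists>m<length P. E (P ! m) x" "x \<in> V" by (auto simp: in_set_conv_nth intro: edge_in_V(2))
  show "x \<notin> set P" by fact
qed

lemma boundary_territory_nonempty: "boundary (territory P r) \<noteq> {}"
proof -
  obtain p where p: "p \<in> set P" using guards_path(2) by (cases P) auto
  then have "reach V E r p" using connected guards_robber guards_path(3)
    unfolding connected_graph_def by auto
  moreover have "p \<notin> territory P r" using territory_subset p subset_closed_nbh by auto
  ultimately obtain c d where "c \<in> territory P r" "d \<notin> territory P r" "E c d"
    using rtranclp_exit_edge[of V r p "territory P r"] robber_in_territory
    unfolding reach_eq by auto
  then show ?thesis unfolding boundary_def by auto
qed

lemma robber_move_in_territory:
  assumes "r' \<in> V" "r' = r \<or> E r r'" "r' \<notin> closed_nbh S" "closed_nbh (set P) \<subseteq> closed_nbh S"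
  shows "r' \<in> territory P r"
  using assms territory_closed[OF robber_in_territory] robber_in_territory by auto

lemma territory_drop_vertex:
  assumes m: "m < length P" and sP': "set P - {P ! m} \<subseteq> set P'" "set P' \<subseteq> set P"
    and no_private: "\<nexists>x. private_nbr P r m x"
    and r': "r' \<in> V" "r' = r \<or> E r r'" "r' \<notin> closed_nbh (set P')"
  shows "territory P' r' = territory P r"
proof -
  have closed: "b \<in> territory P r"
    if ab: "a \<in> territory P r" "b \<in> V - closed_nbh (set P')" "E a b" for a b
  proof (rule ccontr)
    assume "b \<notin> territory P r"
    then have b: "b \<in> boundary (territory P r)" using boundary_territoryI ab by blast
    have "m' = m" if "m' < length P" "E (P ! m') b" for m'
    proof (rule ccontr)
      assume "m' \<noteq> m"
      then have "P ! m' \<in> set P'"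
        using guards_path(1) m that(1) sP'(1) unfolding induced_path_def
        by (auto simp: nth_eq_iff_index_eq)
      then show False using that(2) ab(2) unfolding closed_nbh_def by auto
    qed
    then have "private_nbr P r m b"
      using b boundary_territoryD(1)[OF b] unfolding private_nbr_def by blast
    then show False using no_private by blast
  qed
  have r'_in: "r' \<in> territory P r"
    using r' closed[OF robber_in_territory] robber_in_territory by auto
  have "territory P' r' \<subseteq> territory P r"
    unfolding territory_def[of P'] using component_of_least[OF r'_in] closed by blast
  moreover have "territory P r \<subseteq> territory P' r'"
    using component_of_eq[OF r'_in[unfolded territory_def]]
      component_of_mono[OF Diff_mono[OF order_refl closed_nbh_mono[OF sP'(2)]]]
    unfolding territory_def by metis
  ultimately show ?thesis by blast
qed

lemma territory_shrinks:
  assumes r': "r' \<in> territory P r" "r' \<in> V - closed_nbh S"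
    and closed: "\<And>a b. a \<in> territory P r \<Longrightarrow> b \<in> V - closed_nbh S \<Longrightarrow> E a b \<Longrightarrow> b \<in> territory P r"
    and c: "c \<in> territory P r" "c \<in> closed_nbh S"
  shows "card (component_of (V - closed_nbh S) r') < card (territory P r)"
proof -
  have "component_of (V - closed_nbh S) r' \<subseteq> territory P r"
    using component_of_least[OF r'(1)] closed by blast
  moreover have "c \<notin> component_of (V - closed_nbh S) r'"
    using component_of_subset[OF r'(2)] c(2) by auto
  ultimately have "component_of (V - closed_nbh S) r' \<subset> territory P r" using c(1) by blast
  then show ?thesis using finite_territory by (rule psubset_card_mono[rotated])
qed

end

lemma formation_butlast:
  assumes f: "formation P J" and "2 \<le> length P"
  shows "formation (butlast P) (map (\<lambda>j. min j (length P - 2)) J)"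
  unfolding formation_def
proof (intro conjI allI impI)
  show "induced_path (butlast P)" "set (butlast P) \<subseteq> V"
    using f induced_path_take[of P "length P - 1"] unfolding formation_def
    by (auto simp: butlast_conv_take dest: in_set_takeD)
  show "butlast P \<noteq> []" using assms(2) by (cases P rule: rev_cases) auto
  fix m assume "m < length (butlast P)"
  then have "m < length P" by simp
  then obtain j where "j < k" "J ! j = m" using f unfolding formation_def by blast
  then show "\<exists>j<k. map (\<lambda>j. min j (length P - 2)) J ! j = m"
    using f \<open>m < length (butlast P)\<close> unfolding formation_def by (intro exI[of _ j]) auto
qed (use f assms(2) in \<open>auto simp: formation_def\<close>)

lemma cop_step_butlast:
  assumes f: "formation P J" and "2 \<le> length P"
  shows "cop_step E (map ((!) P) J) (map ((!) (butlast P)) (map (\<lambda>j. min j (length P - 2)) J))"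
proof (rule cop_step_mapI)
  fix j assume "j < length J"
  then have "J ! j < length P" using f unfolding formation_def by auto
  moreover have "E (P ! (length P - 1)) (P ! (length P - 2))"
    using f assms(2) unfolding formation_def induced_path_def by auto
  ultimately show "butlast P ! (map (\<lambda>j. min j (length P - 2)) J ! j) = P ! (J ! j) \<or>
      E (P ! (J ! j)) (butlast P ! (map (\<lambda>j. min j (length P - 2)) J ! j))"
  proof (cases "J ! j \<le> length P - 2")
    case False
    then have "J ! j = length P - 1" using \<open>J ! j < length P\<close> by linarith
    then show ?thesis using \<open>E (P ! (length P - 1)) (P ! (length P - 2))\<close> \<open>j < length J\<close> assms(2)
      by (simp add: nth_butlast)
  qed (use \<open>j < length J\<close> assms(2) in \<open>simp add: nth_butlast\<close>)
qed simp

lemma formation_tl: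
  assumes f: "formation P J" and "2 \<le> length P"
  shows "formation (tl P) (map (\<lambda>j. j - 1) J)"
  unfolding formation_def
proof (intro conjI allI impI)
  show "induced_path (tl P)"
    using f induced_path_drop[of P 1] unfolding formation_def by (simp add: drop_Suc)
  show "tl P \<noteq> []" "set (tl P) \<subseteq> V" using f assms(2) unfolding formation_def by (cases P; auto)+
  fix m assume "m < length (tl P)"
  then have "Suc m < length P" by simp
  then obtain j where "j < k" "J ! j = Suc m" using f unfolding formation_def by blast
  then show "\<exists>j<k. map (\<lambda>j. j - 1) J ! j = m"
    using f unfolding formation_def by (intro exI[of _ j]) auto
qed (use f assms(2) in \<open>auto simp: formation_def\<close>)

lemma cop_step_tl:
  assumes f: "formation P J" and "2 \<le> length P"
  shows "cop_step E (map ((!) P) J) (map ((!) (tl P)) (map (\<lambda>j. j - 1) J))"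
proof (rule cop_step_mapI)
  fix j assume "j < length J"
  then have "J ! j < length P" using f unfolding formation_def by auto
  moreover have "E (P ! 0) (P ! 1)" using f assms(2) unfolding formation_def induced_path_def by auto
  ultimately show "tl P ! (map (\<lambda>j. j - 1) J ! j) = P ! (J ! j) \<or>
      E (P ! (J ! j)) (tl P ! (map (\<lambda>j. j - 1) J ! j))"
    using \<open>j < length J\<close> assms(2) by (cases "J ! j") (auto simp: nth_tl)
qed simp

lemma formation_advance_inner:
  assumes f: "formation P J"
  shows "formation P (advance (\<lambda>m. m < length P - 1) J)"
  unfolding formation_def
proof (intro conjI allI impI)
  fix m assume "m < length P"
  then obtain j where "j < k" "J ! j = m" "\<not> duplicate J j"
    using f exists_non_duplicate unfolding formation_def by meson
  then show "\<exists>j<k. advance (\<lambda>m. m < length P - 1) J ! j = m"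
    using f unfolding formation_def by (intro exI[of _ j]) (simp add: nth_advance)
qed (use f in \<open>auto simp: formation_def nth_advance\<close>)

lemma formation_advance_end:
  assumes f: "formation P J" and v: "induced_path (P @ [v])" "v \<in> V"
    and dup: "\<exists>j<k. J ! j = length P - 1 \<and> duplicate J j"
  shows "formation (P @ [v]) (advance (\<lambda>m. m = length P - 1) J)"
  unfolding formation_def
proof (intro conjI allI impI)
  fix m assume m: "m < length (P @ [v])"
  show "\<exists>j<k. advance (\<lambda>m. m = length P - 1) J ! j = m"
  proof (cases "m < length P")
    case True
    then obtain j where "j < k" "J ! j = m" "\<not> duplicate J j"
      using f exists_non_duplicate unfolding formation_def by meson
    then show ?thesis using f unfolding formation_def by (intro exI[of _ j]) (simp add: nth_advance)
  next
    case False
    then show ?thesis using dup m f unfolding formation_def by (auto simp: nth_advance)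
  qed
qed (use f v in \<open>auto simp: formation_def nth_advance\<close>)

lemma formation_relocate:
  assumes f: "formation P J" and "length P = 1" "v \<in> V"
  shows "formation [v] J"
  using assms unfolding formation_def induced_path_def by auto

context
  fixes P J r
  assumes g: "guards P J r"
begin

lemma progress_butlast:
  assumes "2 \<le> length P" "\<nexists>x. private_nbr P r (length P - 1) x"
    and r': "r' \<in> V" "r' = r \<or> E r r'" "r' \<notin> closed_nbh (set (butlast P))"
  shows "((butlast P, J', r'), (P, J, r)) \<in> progress"
proof -
  have "set P = set (butlast P @ [last P])"
    by (simp only: append_butlast_last_id[OF guards_path(2)[OF g]])
  then have "set P = insert (P ! (length P - 1)) (set (butlast P))"
    using last_conv_nth[OF guards_path(2)[OF g]] by simp
  then have "territory (butlast P) r' = territory P r"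
    by (intro territory_drop_vertex[OF g _ _ _ assms(2) r']) (use assms(1) in auto)
  then show ?thesis using progress_shorter_path assms(1) by simp
qed

lemma progress_tl:
  assumes "2 \<le> length P" "\<nexists>x. private_nbr P r 0 x"
    and r': "r' \<in> V" "r' = r \<or> E r r'" "r' \<notin> closed_nbh (set (tl P))"
  shows "((tl P, J', r'), (P, J, r)) \<in> progress"
proof -
  have "set P - {P ! 0} \<subseteq> set (tl P)" "set (tl P) \<subseteq> set P" using assms(1) by (cases P; auto)+
  then have "territory (tl P) r' = territory P r"
    using territory_drop_vertex[OF g _ _ _ assms(2) r'] assms(1) guards_path(2)[OF g] by simp
  then show ?thesis using progress_shorter_path assms(1) by simp
qed

lemma progress_advance_inner:
  assumes "\<exists>j<k. J ! j < length P - 1 \<and> duplicate J j"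
    and r': "r' \<in> V" "r' = r \<or> E r r'" "r' \<notin> closed_nbh (set P)"
  shows "((P, advance (\<lambda>m. m < length P - 1) J, r'), (P, J, r)) \<in> progress"
proof (rule progress_advance)
  have "r' \<in> territory P r" using robber_move_in_territory[OF g r'] by simp
  then show "territory P r' = territory P r" unfolding territory_def using component_of_eq by metis
  show "(\<Sum>j<length J. length P - 1 - advance (\<lambda>m. m < length P - 1) J ! j)
      < (\<Sum>j<length J. length P - 1 - J ! j)"
    by (rule sum_strict_mono_ex1) (use assms(1) guards_cops(1)[OF g] in \<open>auto simp: nth_advance\<close>)
qed simp

lemma progress_extend:
  assumes v: "private_nbr P r (length P - 1) v"
    and r': "r' \<in> V" "r' = r \<or> E r r'" "r' \<notin> closed_nbh (set (P @ [v]))"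
  shows "((P @ [v], J', r'), (P, J, r)) \<in> progress"
proof -
  have sub: "closed_nbh (set P) \<subseteq> closed_nbh (set (P @ [v]))" by (rule closed_nbh_mono) auto
  obtain c where c: "c \<in> territory P r" "E c v" using v unfolding private_nbr_def boundary_def by auto
  have cn: "c \<in> closed_nbh (set (P @ [v]))" using edge_sym[OF c(2)] unfolding closed_nbh_def by auto
  have closed: "b \<in> territory P r"
    if "a \<in> territory P r" "b \<in> V - closed_nbh (set (P @ [v]))" "E a b" for a b
    using territory_closed[OF g that(1) _ that(3)] sub that(2) by blast
  have "card (component_of (V - closed_nbh (set (P @ [v]))) r') < card (territory P r)"
    by (rule territory_shrinks[OF g robber_move_in_territory[OF g r' sub] _ closed c(1) cn])
      (use r' in simp)
  then have "card (territory (P @ [v]) r') < card (territory P r)"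
    unfolding territory_def[of "P @ [v]" r'] .
  then show ?thesis by (rule progress_smaller_territory)
qed

lemma progress_relocate:
  assumes bd: "boundary (territory P r) \<subseteq> {v}" "v \<in> boundary (territory P r)"
    and r': "r' \<in> V" "r' = r \<or> E r r'" "r' \<notin> closed_nbh {v}"
  shows "(([v], J', r'), (P, J, r)) \<in> progress"
proof -
  have closed: "b \<in> territory P r"
    if "a \<in> territory P r" "b \<in> V - closed_nbh {v}" "E a b" for a b
  proof (rule ccontr)
    assume "b \<notin> territory P r"
    then have "b = v" using bd(1) boundary_territoryI[OF g that(1) _ that(3)] by blast
    then show False using that(2) subset_closed_nbh[of "{v}"] by blast
  qed
  have r'_in: "r' \<in> territory P r"
    using r' closed[OF robber_in_territory[OF g]] robber_in_territory[OF g] by auto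
  obtain c where c: "c \<in> territory P r" "E c v" using bd(2) unfolding boundary_def by auto
  have cn: "c \<in> closed_nbh {v}" using edge_sym[OF c(2)] unfolding closed_nbh_def by auto
  have "card (component_of (V - closed_nbh {v}) r') < card (territory P r)"
    by (rule territory_shrinks[OF g r'_in _ closed c(1) cn]) (use r' in simp)
  then have "card (territory [v] r') < card (territory P r)"
    unfolding territory_def[of "[v]" r'] by simp
  then show ?thesis by (rule progress_smaller_territory)
qed

lemma private_nbrs_of_ends_eq:
  assumes "k \<le> length P" "private_nbr P r 0 x" "private_nbr P r (length P - 1) y"
  shows "x = y"
proof (rule ccontr)
  assume "x \<noteq> y"
  then obtain vs where "induced_cycle V E vs" "length vs \<ge> length P + 2"
    using long_induced_cycle[OF guards_path[OF g] guards_robber[OF g]] assms(2,3)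
    unfolding private_nbr_def territory_def by blast
  then show False using short_induced_cycles assms(1) by fastforce
qed

lemma exists_private_nbr_last:
  assumes "\<not> (2 \<le> length P \<and> (\<nexists>x. private_nbr P r (length P - 1) x))"
  shows "\<exists>v. private_nbr P r (length P - 1) v"
proof (cases "2 \<le> length P")
  case False
  then have "length P = 1" using guards_path(2)[OF g] by (cases P) (auto simp: Suc_le_eq)
  moreover obtain x where "x \<in> boundary (territory P r)" using boundary_territory_nonempty[OF g] by blast
  ultimately have "private_nbr P r 0 x"
    using boundary_territoryD(1)[OF g] unfolding private_nbr_def by auto
  then show ?thesis using \<open>length P = 1\<close> by auto
qed (use assms in blast)

lemma cops_le_path_length:
  assumes "\<not> (\<exists>j<k. J ! j < length P - 1 \<and> duplicate J j)"
    and "\<not> (\<exists>j<k. J ! j = length P - 1 \<and> duplicate J j)"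
  shows "k \<le> length P"
proof (rule card_le_if_no_duplicate)
  fix j assume "j < k"
  then have "J ! j < length P - 1 \<or> J ! j = length P - 1" using guards_cops(2)[OF g] by fastforce
  then show "\<not> duplicate J j" using assms \<open>j < k\<close> by blast
qed (use guards_cops(2)[OF g] in blast)

lemma relocation_case:
  assumes "k \<le> length P" "\<not> (2 \<le> length P \<and> (\<nexists>x. private_nbr P r 0 x))"
    and v: "private_nbr P r (length P - 1) v"
  shows "length P = 1" "boundary (territory P r) \<subseteq> {v}"
proof -
  show len: "length P = 1"
  proof (rule ccontr)
    assume "length P \<noteq> 1"
    then have "2 \<le> length P" using guards_path(2)[OF g] by (cases P) (auto simp: Suc_le_eq)
    then obtain x where "private_nbr P r 0 x" using assms(2) by blast
    moreover from this have "x = v" using private_nbrs_of_ends_eq assms(1) v by blast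
    ultimately show False using v \<open>2 \<le> length P\<close> unfolding private_nbr_def by force
  qed
  show "boundary (territory P r) \<subseteq> {v}"
  proof
    fix x assume "x \<in> boundary (territory P r)"
    then have "private_nbr P r 0 x"
      using boundary_territoryD(1)[OF g] len unfolding private_nbr_def by auto
    then show "x \<in> {v}" using private_nbrs_of_ends_eq assms(1) v by blast
  qed
qed

end

definition plan :: "'a list \<Rightarrow> nat list \<Rightarrow> 'a \<Rightarrow> 'a list \<times> nat list" where
  "plan P J r =
    (let v = SOME v. private_nbr P r (length P - 1) v in
     if 2 \<le> length P \<and> (\<nexists>x. private_nbr P r (length P - 1) x)
       then (butlast P, map (\<lambda>j. min j (length P - 2)) J)
     else if 2 \<le> length P \<and> (\<nexists>x. private_nbr P r 0 x) then (tl P, map (\<lambda>j. j - 1) J)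
     else if \<exists>j<k. J ! j < length P - 1 \<and> duplicate J j then (P, advance (\<lambda>m. m < length P - 1) J)
     else if \<exists>j<k. J ! j = length P - 1 \<and> duplicate J j
       then (P @ [v], advance (\<lambda>m. m = length P - 1) J)
     else ([v], J))"

lemma plan_extend:
  assumes g: "guards P J r" and v: "private_nbr P r (length P - 1) v"
    and dup: "\<exists>j<k. J ! j = length P - 1 \<and> duplicate J j"
    and r': "r' \<in> V" "r' = r \<or> E r r'"
  shows "formation (P @ [v]) (advance (\<lambda>m. m = length P - 1) J) \<and>
    cop_step E (map ((!) P) J) (map ((!) (P @ [v])) (advance (\<lambda>m. m = length P - 1) J)) \<and>
    (r' \<notin> closed_nbh (set (P @ [v])) \<longrightarrow>
      ((P @ [v], advance (\<lambda>m. m = length P - 1) J, r'), (P, J, r)) \<in> progress)"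
proof (intro conjI impI)
  have vb: "v \<in> boundary (territory P r)" "E (P ! (length P - 1)) v"
    using v unfolding private_nbr_def by auto
  have "induced_path (P @ [v])"
    by (rule induced_path_snoc[OF guards_path(1,2)[OF g] boundary_territoryD(2)[OF g vb(1)]])
      (use v in \<open>auto simp: private_nbr_def\<close>)
  then show "formation (P @ [v]) (advance (\<lambda>m. m = length P - 1) J)"
    using formation_advance_end[OF guards_formation[OF g] _ boundary_territoryD(3)[OF g vb(1)] dup]
    by simp
  show "cop_step E (map ((!) P) J) (map ((!) (P @ [v])) (advance (\<lambda>m. m = length P - 1) J))"
    by (rule cop_step_advance)
      (use vb(2) guards_path(2)[OF g] guards_cops[OF g] in \<open>auto simp: nth_append\<close>)
  show "((P @ [v], advance (\<lambda>m. m = length P - 1) J, r'), (P, J, r)) \<in> progress"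
    if "r' \<notin> closed_nbh (set (P @ [v]))" using progress_extend[OF g v r' that] .
qed

lemma plan_relocate:
  assumes g: "guards P J r" and v: "private_nbr P r (length P - 1) v"
    and len: "length P = 1" and bd: "boundary (territory P r) \<subseteq> {v}"
    and r': "r' \<in> V" "r' = r \<or> E r r'"
  shows "formation [v] J \<and> cop_step E (map ((!) P) J) (map ((!) [v]) J) \<and>
    (r' \<notin> closed_nbh {v} \<longrightarrow> (([v], J, r'), (P, J, r)) \<in> progress)"
proof (intro conjI impI)
  have vb: "v \<in> boundary (territory P r)" "E (P ! 0) v" using v len unfolding private_nbr_def by auto
  then show "formation [v] J"
    using formation_relocate[OF guards_formation[OF g] len boundary_territoryD(3)[OF g]] by blast
  show "cop_step E (map ((!) P) J) (map ((!) [v]) J)"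
    by (rule cop_step_mapI) (use guards_cops[OF g] len vb(2) in \<open>auto simp: less_Suc_eq\<close>)
  show "(([v], J, r'), (P, J, r)) \<in> progress" if "r' \<notin> closed_nbh {v}"
    using progress_relocate[OF g bd vb(1) r' that] .
qed

lemma plan_step_last:
  assumes g: "guards P J r" and r': "r' \<in> V" "r' = r \<or> E r r'" and pl: "plan P J r = (P', J')"
    and conds: "\<not> (2 \<le> length P \<and> (\<nexists>x. private_nbr P r (length P - 1) x))"
      "\<not> (2 \<le> length P \<and> (\<nexists>x. private_nbr P r 0 x))"
      "\<not> (\<exists>j<k. J ! j < length P - 1 \<and> duplicate J j)"
  shows "formation P' J' \<and> cop_step E (map ((!) P) J) (map ((!) P') J') \<and>
    (r' \<notin> closed_nbh (set P') \<longrightarrow> ((P', J', r'), (P, J, r)) \<in> progress)"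
proof -
  let ?v = "SOME v. private_nbr P r (length P - 1) v"
  have v: "private_nbr P r (length P - 1) ?v"
    using exists_private_nbr_last[OF g conds(1)] by (rule someI_ex)
  note earlier_cases = if_not_P[OF conds(1)] if_not_P[OF conds(2)] if_not_P[OF conds(3)]
  show ?thesis
  proof (cases "\<exists>j<k. J ! j = length P - 1 \<and> duplicate J j")
    case True
    have "(P', J') = (P @ [?v], advance (\<lambda>m. m = length P - 1) J)"
      using pl unfolding plan_def Let_def earlier_cases if_P[OF True] by (rule sym)
    then show ?thesis using plan_extend[OF g v True r'] by simp
  next
    case False
    have "k \<le> length P" using cops_le_path_length[OF g conds(3) False] .
    moreover have "(P', J') = ([?v], J)"
      using pl unfolding plan_def Let_def earlier_cases if_not_P[OF False] by (rule sym)
    ultimately show ?thesis using plan_relocate[OF g v relocation_case[OF g _ conds(2) v] r'] by simp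
  qed
qed

lemma plan_step:
  assumes g: "guards P J r" and r': "r' \<in> V" "r' = r \<or> E r r'" and pl: "plan P J r = (P', J')"
  shows "formation P' J' \<and> cop_step E (map ((!) P) J) (map ((!) P') J') \<and>
    (r' \<notin> closed_nbh (set P') \<longrightarrow> ((P', J', r'), (P, J, r)) \<in> progress)"
proof -
  have f: "formation P J" using guards_formation[OF g] .
  consider (drop_last) "2 \<le> length P" "\<nexists>x. private_nbr P r (length P - 1) x"
    | (drop_first) "\<not> (2 \<le> length P \<and> (\<nexists>x. private_nbr P r (length P - 1) x))"
        "2 \<le> length P" "\<nexists>x. private_nbr P r 0 x"
    | (advance) "\<not> (2 \<le> length P \<and> (\<nexists>x. private_nbr P r (length P - 1) x))"
        "\<not> (2 \<le> length P \<and> (\<nexists>x. private_nbr P r 0 x))"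
        "\<exists>j<k. J ! j < length P - 1 \<and> duplicate J j"
    | (extend) "\<not> (2 \<le> length P \<and> (\<nexists>x. private_nbr P r (length P - 1) x))"
        "\<not> (2 \<le> length P \<and> (\<nexists>x. private_nbr P r 0 x))"
        "\<not> (\<exists>j<k. J ! j < length P - 1 \<and> duplicate J j)"
    by blast
  then show ?thesis
  proof cases
    case drop_last
    have "(P', J') = (butlast P, map (\<lambda>j. min j (length P - 2)) J)"
      using pl unfolding plan_def Let_def if_P[OF conjI[OF drop_last]] by (rule sym)
    then show ?thesis
      using drop_last formation_butlast[OF f] cop_step_butlast[OF f] progress_butlast[OF g _ _ r']
      by simp
  next
    case drop_first
    have "(P', J') = (tl P, map (\<lambda>j. j - 1) J)"
      using pl unfolding plan_def Let_def if_not_P[OF drop_first(1)] if_P[OF conjI[OF drop_first(2,3)]]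
      by (rule sym)
    then show ?thesis
      using drop_first formation_tl[OF f] cop_step_tl[OF f] progress_tl[OF g _ _ r'] by simp
  next
    case advance
    have "(P', J') = (P, advance (\<lambda>m. m < length P - 1) J)"
      using pl unfolding plan_def Let_def if_not_P[OF advance(1)] if_not_P[OF advance(2)]
        if_P[OF advance(3)]
      by (rule sym)
    moreover have "cop_step E (map ((!) P) J) (map ((!) P) (advance (\<lambda>m. m < length P - 1) J))"
      by (rule cop_step_advance) (use f in \<open>auto simp: formation_def induced_path_def\<close>)
    ultimately show ?thesis
      using advance(3) formation_advance_inner[OF f] progress_advance_inner[OF g _ r'] by simp
  next
    case extend
    then show ?thesis using plan_step_last[OF g r' pl] by blast
  qed
qed

text \<open>The cop strategy is driven by an internal state \<open>(Q, P, J)\<close>: the cop positions \<open>Q\<close> and the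
  formation \<open>(P, J)\<close> they realise. While the robber is outside \<open>N[P]\<close> the cops follow \<open>plan\<close>;
  once he enters \<open>N[P]\<close>, some cop is on or next to him and captures him.\<close>
definition can_capture :: "'a list \<Rightarrow> 'a \<Rightarrow> bool" where
  "can_capture Q r \<longleftrightarrow> (\<exists>j<length Q. Q ! j = r \<or> E (Q ! j) r)"

definition respond :: "'a list \<times> 'a list \<times> nat list \<Rightarrow> 'a \<Rightarrow> 'a list \<times> 'a list \<times> nat list" where
  "respond \<sigma> r = (case \<sigma> of (Q, P, J) \<Rightarrow>
    if Q = map ((!) P) J \<and> guards P J r then (case plan P J r of (P', J') \<Rightarrow> (map ((!) P') J', P', J'))
    else if can_capture Q r then (Q[(SOME j. j < length Q \<and> (Q ! j = r \<or> E (Q ! j) r)) := r], P, J)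
    else \<sigma>)"

definition start_vertex :: 'a where
  "start_vertex = (SOME a. a \<in> V)"

definition initial_state :: "'a list \<times> 'a list \<times> nat list" where
  "initial_state = (replicate k start_vertex, [start_vertex], replicate k 0)"

definition strategy :: "('a list \<times> 'a) list \<Rightarrow> 'a list" where
  "strategy h = fst (foldl respond initial_state (map snd h))"

definition state :: "(nat \<Rightarrow> 'a) \<Rightarrow> nat \<Rightarrow> 'a list \<times> 'a list \<times> nat list" where
  "state R t = foldl respond initial_state (map R [0..<t])"

lemma start_vertex_in_V: "start_vertex \<in> V"
  using connected unfolding start_vertex_def connected_graph_def by (simp add: some_in_eq)

lemma cop_step_respond: "cop_step E (fst \<sigma>) (fst (respond \<sigma> r))"
proof -
  obtain Q P J where \<sigma>: "\<sigma> = (Q, P, J)" by (cases \<sigma>) auto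
  consider (follow) "Q = map ((!) P) J" "guards P J r"
    | (capture) "\<not> (Q = map ((!) P) J \<and> guards P J r)" "can_capture Q r"
    | (wait) "\<not> (Q = map ((!) P) J \<and> guards P J r)" "\<not> can_capture Q r" by blast
  then show ?thesis
  proof cases
    case follow
    obtain P' J' where pl: "plan P J r = (P', J')" by fastforce
    have "r \<in> V" using follow(2) unfolding guards_def by simp
    then show ?thesis
      using plan_step[OF follow(2) \<open>r \<in> V\<close> disjI1[OF refl] pl] follow(1)
      unfolding \<sigma> respond_def prod.case if_P[OF conjI[OF follow]] pl
      by simp
  next
    case capture
    define j where "j = (SOME j. j < length Q \<and> (Q ! j = r \<or> E (Q ! j) r))"
    have "j < length Q \<and> (Q ! j = r \<or> E (Q ! j) r)"
      using capture(2) unfolding can_capture_def j_def by (rule someI_ex)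
    then have "cop_step E Q (Q[j := r])" unfolding cop_step_def by (auto simp: nth_list_update)
    then show ?thesis
      unfolding \<sigma> respond_def prod.case if_not_P[OF capture(1)] if_P[OF capture(2)] j_def[symmetric]
      by simp
  next
    case wait
    then show ?thesis
      unfolding \<sigma> respond_def prod.case if_not_P[OF wait(1)] if_not_P[OF wait(2)] cop_step_def by simp
  qed
qed

lemma respond_captures:
  assumes "Q = map ((!) P) J" "formation P J" "r \<in> closed_nbh (set P)"
  shows "\<exists>j<k. fst (respond (Q, P, J) r) ! j = r"
proof -
  obtain m where m: "m < length P" "P ! m = r \<or> E (P ! m) r"
    using assms(3) unfolding closed_nbh_def by (auto simp: in_set_conv_nth)
  then obtain j where "j < k" "J ! j = m" using assms(2) unfolding formation_def by blast
  moreover have "length Q = k" using assms(1,2) unfolding formation_def by simp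
  ultimately have capture: "can_capture Q r" using assms(1) m unfolding can_capture_def by auto
  define j0 where "j0 = (SOME j. j < length Q \<and> (Q ! j = r \<or> E (Q ! j) r))"
  have "j0 < length Q" using capture unfolding can_capture_def j0_def by (rule someI2_ex) blast
  have ng: "\<not> (Q = map ((!) P) J \<and> guards P J r)" using assms(3) unfolding guards_def by simp
  have "fst (respond (Q, P, J) r) = Q[j0 := r]"
    unfolding respond_def prod.case if_not_P[OF ng] if_P[OF capture] j0_def[symmetric] by simp
  then show ?thesis using \<open>j0 < length Q\<close> \<open>length Q = k\<close> by (intro exI[of _ j0]) simp
qed

lemma state_Suc: "state R (Suc t) = respond (state R t) (R t)"
  unfolding state_def by simp

lemma map_snd_history: "map snd (history s R t) = map R [0..<Suc t]"
  by (induction t) auto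

lemma cop_pos_strategy: "cop_pos strategy R t = fst (state R t)"
proof (cases t)
  case 0 then show ?thesis unfolding cop_pos_def state_def strategy_def by simp
next
  case (Suc t')
  have "cop_pos strategy R t = strategy (history strategy R t')" unfolding cop_pos_def Suc by simp
  also have "\<dots> = fst (state R t)" unfolding strategy_def state_def map_snd_history Suc ..
  finally show ?thesis .
qed

lemma robber_walk_in_V: "robber_walk V E R \<Longrightarrow> R t \<in> V"
  unfolding robber_walk_def by (induction t) (metis edge_in_V(2))+

lemma respond_follow:
  assumes "guards P J r" "plan P J r = (P', J')"
  shows "respond (map ((!) P) J, P, J) r = (map ((!) P') J', P', J')"
  using assms unfolding respond_def by simp

context
  fixes R :: "nat \<Rightarrow> 'a"
  assumes walk: "robber_walk V E R"
    and uncaught: "\<And>t. \<not> (\<exists>j<k. fst (state R (Suc t)) ! j = R t)"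
begin

lemma uncaught_robber_guarded: "\<exists>P J. state R t = (map ((!) P) J, P, J) \<and> guards P J (R t)"
proof (induction t)
  case 0
  let ?a = start_vertex
  have s: "state R 0 = (map ((!) [?a]) (replicate k 0), [?a], replicate k 0)"
    unfolding state_def initial_state_def by (simp add: map_replicate_const)
  have f: "formation [?a] (replicate k 0)"
    using start_vertex_in_V k_pos unfolding formation_def induced_path_def by (auto intro: exI[of _ 0])
  have "R 0 \<notin> closed_nbh (set [?a])"
    using respond_captures[OF refl f] uncaught[of 0] s unfolding state_Suc by force
  then show ?case using s f robber_walk_in_V[OF walk] unfolding guards_def by blast
next
  case (Suc t)
  then obtain P J where s: "state R t = (map ((!) P) J, P, J)" and g: "guards P J (R t)" by blast
  obtain P' J' where pl: "plan P J (R t) = (P', J')" by fastforce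
  have s': "state R (Suc t) = (map ((!) P') J', P', J')"
    unfolding state_Suc s using respond_follow[OF g pl] .
  have f: "formation P' J'"
    using plan_step[OF g robber_walk_in_V[OF walk] _ pl] walk unfolding robber_walk_def by blast
  have "R (Suc t) \<notin> closed_nbh (set P')"
    using respond_captures[OF refl f] uncaught[of "Suc t"] s' unfolding state_Suc[of R "Suc t"] by force
  then show ?case using s' f robber_walk_in_V[OF walk] unfolding guards_def by blast
qed

lemma uncaught_robber_progress:
  "((fst (snd (state R (Suc t))), snd (snd (state R (Suc t))), R (Suc t)),
    (fst (snd (state R t)), snd (snd (state R t)), R t)) \<in> progress"
proof -
  obtain P J where s: "state R t = (map ((!) P) J, P, J)" and g: "guards P J (R t)"
    using uncaught_robber_guarded by blast
  obtain P' J' where pl: "plan P J (R t) = (P', J')" by fastforce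
  have s': "state R (Suc t) = (map ((!) P') J', P', J')"
    unfolding state_Suc s using respond_follow[OF g pl] .
  moreover have "R (Suc t) \<notin> closed_nbh (set P')"
    using uncaught_robber_guarded[of "Suc t"] s' unfolding guards_def by auto
  ultimately show ?thesis
    using plan_step[OF g robber_walk_in_V[OF walk] _ pl] walk s unfolding robber_walk_def by auto
qed

end

theorem strategy_wins: "winning_cop_strategy V E k strategy"
  unfolding winning_cop_strategy_def
proof (intro conjI allI impI)
  show "length (strategy []) = k" "set (strategy []) \<subseteq> V"
    unfolding strategy_def initial_state_def using start_vertex_in_V by auto
  show "cop_step E (cop_pos strategy R t) (cop_pos strategy R (Suc t))" for R t
    unfolding cop_pos_strategy state_Suc by (rule cop_step_respond)
next
  fix R assume walk: "robber_walk V E R"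
  show "\<exists>t. \<exists>j<k. cop_pos strategy R t ! j = R t \<or> cop_pos strategy R (Suc t) ! j = R t"
  proof (rule ccontr)
    assume "\<not> ?thesis"
    then have "\<not> (\<exists>j<k. fst (state R (Suc t)) ! j = R t)" for t unfolding cop_pos_strategy by blast
    then show False
      using wf_no_infinite_down_chainE[OF wf_progress,
          of "\<lambda>t. (fst (snd (state R t)), snd (snd (state R t)), R t)"]
        uncaught_robber_progress[OF walk] by blast
  qed
qed

lemma cops_win: "cops_win V E k"
  unfolding cops_win_def using strategy_wins by blast

end

lemma reach_in_V: "reach V E v u \<Longrightarrow> v \<in> V \<Longrightarrow> u \<in> V"
  unfolding reach_def by (induction rule: rtranclp_induct) auto

lemma reach_within_component:
  assumes "reach V E v u"
  defines "C \<equiv> {u. reach V E v u}"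
  shows "reach C (\<lambda>x y. E x y \<and> x \<in> C \<and> y \<in> C) v u"
  using assms(1) unfolding reach_def
proof (induction rule: rtranclp_induct)
  case (step a b)
  have "a \<in> C" "b \<in> C"
    using step.hyps rtranclp.rtrancl_into_rtrancl[OF step.hyps] unfolding C_def reach_def by simp_all
  then show ?case using rtranclp.rtrancl_into_rtrancl[OF step.IH] step.hyps(2) by simp
qed simp

lemma connected_component:
  assumes "graph V E" "v \<in> V"
  defines "C \<equiv> {u. reach V E v u}"
  shows "connected_graph C (\<lambda>x y. E x y \<and> x \<in> C \<and> y \<in> C)"
proof -
  let ?E = "\<lambda>x y. E x y \<and> x \<in> C \<and> y \<in> C"
  have "E x y \<Longrightarrow> E y x" for x y using assms(1) unfolding graph_def by blast
  then have "symp (\<lambda>x y. ?E x y \<and> x \<in> C \<and> y \<in> C)" unfolding symp_def by blast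
  then have sym: "reach C ?E u w \<Longrightarrow> reach C ?E w u" for u w
    unfolding reach_def by (rule sympD[OF symp_rtranclp])
  have from_v: "reach C ?E v u" if "u \<in> C" for u
    using reach_within_component[of V E v u] that unfolding C_def by simp
  have "reach C ?E u w" if "u \<in> C" "w \<in> C" for u w
    using sym[OF from_v[OF that(1)]] from_v[OF that(2)] unfolding reach_def by (rule rtranclp_trans)
  moreover have "v \<in> C" unfolding C_def reach_def by simp
  ultimately show ?thesis unfolding connected_graph_def by blast
qed

lemma cops_win_component:
  assumes g: "graph V E" and "l \<ge> 3" and no_long: "\<not> (\<exists>vs. induced_cycle V E vs \<and> length vs \<ge> l)"
    and "v \<in> V"
  defines "C \<equiv> {u. reach V E v u}"
  shows "cops_win C (\<lambda>x y. E x y \<and> x \<in> C \<and> y \<in> C) (l - 2)"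
proof -
  let ?E = "\<lambda>x y. E x y \<and> x \<in> C \<and> y \<in> C"
  have CV: "C \<subseteq> V" using reach_in_V[OF _ \<open>v \<in> V\<close>] unfolding C_def by blast
  moreover have "finite V" using g unfolding graph_def by blast
  ultimately have "graph C ?E" using g finite_subset[OF CV] unfolding graph_def by blast
  moreover have "length vs < l - 2 + 2" if "induced_cycle C ?E vs" for vs
  proof -
    have "induced_cycle V E vs" using that CV unfolding induced_cycle_def by (auto simp: subset_iff)
    then show ?thesis using no_long \<open>l \<ge> 3\<close> by fastforce
  qed
  moreover have "connected_graph C ?E" "1 \<le> l - 2"
    using connected_component[OF g \<open>v \<in> V\<close>] \<open>l \<ge> 3\<close> unfolding C_def by simp_all
  ultimately interpret cop_game C ?E "l - 2"
    by (intro cop_game.intro cop_game_axioms.intro simple_graph.intro)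
  show ?thesis by (rule cops_win)
qed

lemma cop_number_conn_le: "cops_win V E k \<Longrightarrow> 1 \<le> k \<Longrightarrow> cop_number_conn V E \<le> k"
  unfolding cop_number_conn_def by (rule Least_le) simp

theorem proposition3:
  fixes V :: "'a set" and E :: "'a \<Rightarrow> 'a \<Rightarrow> bool" and l :: nat
  assumes "graph V E"
    and "l \<ge> 3"
    and "\<not> (\<exists>vs. induced_cycle V E vs \<and> length vs \<ge> l)"
  shows "cop_number V E \<le> l - 2"
proof (cases "V = {}")
  case True then show ?thesis unfolding cop_number_def by simp
next
  case False
  let ?cop = "\<lambda>C. cop_number_conn C (\<lambda>x y. E x y \<and> x \<in> C \<and> y \<in> C)"
  have comps: "components V E = (\<lambda>v. {u. reach V E v u}) ` V" unfolding components_def by auto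
  have "?cop C \<le> l - 2" if C: "C \<in> components V E" for C
  proof -
    obtain v where "v \<in> V" "C = {u. reach V E v u}" using C comps by auto
    then show ?thesis using cop_number_conn_le[OF cops_win_component[OF assms \<open>v \<in> V\<close>]] assms(2) by simp
  qed
  moreover have "finite (?cop ` components V E)" "?cop ` components V E \<noteq> {}"
    using assms(1) False unfolding comps graph_def by simp_all
  ultimately show ?thesis unfolding cop_number_def using False Max_le_iff by simp
qed

end
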